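(* Let $n \ge 2$. For any experiment design $\mathcal{S} = (S_1,\dots,S_T)$ of subsets of $[n]$, whether adaptive or non-adaptive, that enables nest identification for $n$ items under the Nested Logit model with outside option satisfying Assumption 1 (in the sense defined in the context), we have $|\mathcal{S}| = T = \Omega(\log n)$.
   Context: Nested Logit model with outside option on items $[n]=\{1,\dots,n\}$: $\mathcal{N}$ is a partition of $[n]$ into nests, $N(i)$ the nest containing $i$; weights $v_i > 0$; parameters $\lambda_N \in [0,1]$, with an extra weight $v_N>0$ when $\lambda_N=0$. $v_N(S) = (\sum_{i \in N \cap S} v_i)^{\lambda_N}$ if $\lambda_N \in (0,1]$, $v_N(S) = v_N \mathbf{1}(N \cap S \neq \emptyset)$ if $\lambda_N = 0$. For $i \in S$, $\phi(i,S) = \frac{v_{N(i)}(S)}{1 + \sum_{N} v_N(S)} \cdot \frac{v_i}{\sum_{j \in N(i) \cap S} v_j}$, and the outside option has $\phi(0,S) = \frac{1}{1 + \sum_N v_N(S)}$. Assumption 1: $\lambda_N = 1$ iff $|N| = 1$. An experiment design queries assortments $S_1,\dots,S_T \subseteq [n]$ and observes the exact choice probabilities $\phi(\cdot, S_t)$ for each queried assortment; it is non-adaptive if the $S_t$ are fixed in advance and adaptive if each $S_t$ may depend on the probabilities observed for $S_1,\dots,S_{t-1}$. It enables nest identification if, for every Nested Logit model satisfying Assumption 1, the nest partition $\mathcal{N}$ is uniquely determined by the observed choice probabilities, i.e., no two such models with different nest partitions induce identical choice probabilities on all queried assortments. *)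

theory Defs
  imports Complex_Main "HOL-Library.Disjoint_Sets"
begin

text \<open>A Nested Logit model with outside option on items 1..n (item 0 is the outside option).\<close>
record nl_model =
  nests :: "nat set set"
  wt    :: "nat \<Rightarrow> real"
  lam   :: "nat set \<Rightarrow> real"
  nwt   :: "nat set \<Rightarrow> real"    \<comment> \<open>extra nest weight v_N (used when lambda_N = 0)\<close>

definition nl_valid :: "nat \<Rightarrow> nl_model \<Rightarrow> bool" where
  "nl_valid n M \<longleftrightarrow>
     partition_on {1..n} (nests M) \<and>
     (\<forall>i\<in>{1..n}. wt M i > 0) \<and>
     (\<forall>N\<in>nests M. 0 \<le> lam M N \<and> lam M N \<le> 1) \<and>
     (\<forall>N\<in>nests M. lam M N = 0 \<longrightarrow> nwt M N > 0) \<and>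
     (\<forall>N\<in>nests M. lam M N = 1 \<longleftrightarrow> card N = 1)"
  \<comment> \<open>the last conjunct is Assumption 1\<close>

definition nest_val :: "nl_model \<Rightarrow> nat set \<Rightarrow> nat set \<Rightarrow> real" where
  "nest_val M N S =
     (if lam M N > 0 then (\<Sum>i\<in>N \<inter> S. wt M i) powr (lam M N)
      else nwt M N * (if N \<inter> S \<noteq> {} then 1 else 0))"

definition nest_of :: "nl_model \<Rightarrow> nat \<Rightarrow> nat set" where
  "nest_of M i = (THE N. N \<in> nests M \<and> i \<in> N)"

definition choice_prob :: "nl_model \<Rightarrow> nat \<Rightarrow> nat set \<Rightarrow> real" where
  "choice_prob M i S =
     (if i = 0 then 1 / (1 + (\<Sum>N\<in>nests M. nest_val M N S))
      else if i \<in> S then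
        nest_val M (nest_of M i) S / (1 + (\<Sum>N\<in>nests M. nest_val M N S))
        * (wt M i / (\<Sum>j\<in>nest_of M i \<inter> S. wt M j))
      else 0)"

definition observe :: "nl_model \<Rightarrow> nat set \<Rightarrow> (nat \<Rightarrow> real)" where
  "observe M S = (\<lambda>i. if i \<in> insert 0 S then choice_prob M i S else 0)"

text \<open>An (adaptive) experiment design is a strategy mapping the history of queried
  assortments and observed probabilities to the next assortment.
  Non-adaptive designs are the strategies ignoring the history.\<close>
type_synonym strategy = "(nat set \<times> (nat \<Rightarrow> real)) list \<Rightarrow> nat set"

fun transcript :: "strategy \<Rightarrow> nl_model \<Rightarrow> nat \<Rightarrow> (nat set \<times> (nat \<Rightarrow> real)) list" where
  "transcript \<sigma> M 0 = []"
| "transcript \<sigma> M (Suc t) =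
     (let h = transcript \<sigma> M t in h @ [(\<sigma> h, observe M (\<sigma> h))])"

definition enables_nest_identification :: "nat \<Rightarrow> strategy \<Rightarrow> nat \<Rightarrow> bool" where
  "enables_nest_identification n \<sigma> T \<longleftrightarrow>
     (\<forall>h. \<sigma> h \<subseteq> {1..n}) \<and>
     (\<forall>M1 M2. nl_valid n M1 \<longrightarrow> nl_valid n M2 \<longrightarrow>
        transcript \<sigma> M1 T = transcript \<sigma> M2 T \<longrightarrow> nests M1 = nests M2)"

end

theory Submission
  imports Defs
begin

text \<open>Give every item weight 1 and make each non-singleton nest N a degenerate nest
  (\<lambda>_N = 0) of weight |N|. On an assortment that contains each nest entirely or not
  at all, such a model is indistinguishable from the plain logit model: every offered item
  has probability 1/(1 + |S|). Now T queries assign to every item a membership pattern in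
  {0,1}^T; if n > 2^T two items i, j share a pattern, so merging {i, j} into one
  degenerate nest changes no observation along the whole adaptive transcript, yet changes
  the partition.\<close>

lemma sum_card_Int_partition:
  assumes "partition_on A P" "finite A" "S \<subseteq> A"
  shows "(\<Sum>N\<in>P. card (N \<inter> S)) = card S"
proof -
  have "card S = (\<Sum>x\<in>A. of_bool (x \<in> S))"
    using assms(2,3) by (simp add: Int_absorb1 flip: sum.inter_filter)
  also have "\<dots> = (\<Sum>N\<in>P. \<Sum>x\<in>N. of_bool (x \<in> S))"
    using assms(2,1) by (rule sum.partition)
  also have "\<dots> = (\<Sum>N\<in>P. card (N \<inter> S))"
  proof (rule sum.cong)
    fix N assume "N \<in> P"
    then have "finite N"
      using assms(1,2) by (metis Union_upper finite_subset partition_onD1)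
    then show "(\<Sum>x\<in>N. of_bool (x \<in> S)) = card (N \<inter> S)"
      by (simp add: Int_def flip: sum.inter_filter)
  qed simp
  finally show ?thesis ..
qed

lemma partition_on_pair_singletons:
  assumes "i \<in> A" "j \<in> A"
  shows "partition_on A (insert {i, j} ((\<lambda>k. {k}) ` (A - {i, j})))"
  using assms by (subst partition_on_insert) (auto simp: disjnt_def partition_on_singletons)

lemma ex_pair_not_separated:
  fixes Ss :: "'a set list"
  assumes "finite A" "2 ^ length Ss < card A"
  shows "\<exists>i\<in>A. \<exists>j\<in>A. i \<noteq> j \<and> (\<forall>S\<in>set Ss. i \<in> S \<longleftrightarrow> j \<in> S)"
proof -
  define pattern where "pattern i = map (\<lambda>S. i \<in> S) Ss" for i
  have "pattern ` A \<subseteq> {bs. set bs \<subseteq> UNIV \<and> length bs = length Ss}"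
    by (auto simp: pattern_def)
  then have "card (pattern ` A) \<le> card {bs. set bs \<subseteq> (UNIV :: bool set) \<and> length bs = length Ss}"
    by (intro card_mono finite_lists_length_eq) simp_all
  also have "\<dots> = 2 ^ length Ss"
    using card_lists_length_eq[of "UNIV :: bool set" "length Ss"] by simp
  finally have "card (pattern ` A) < card A"
    using assms(2) by linarith
  then have "\<not> inj_on pattern A"
    using card_image by force
  then show ?thesis
    by (auto simp: inj_on_def pattern_def map_eq_conv)
qed

lemma nest_of_eqI:
  assumes "partition_on A (nests M)" "N \<in> nests M" "i \<in> N"
  shows "nest_of M i = N"
  unfolding nest_of_def
  using assms by (intro the_equality) (auto simp: partition_on_def disjoint_def)

lemma length_transcript [simp]: "length (transcript \<sigma> M t) = t"
  by (induction t) (simp_all add: Let_def)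

lemma fst_set_transcript_subset: "fst ` set (transcript \<sigma> M t) \<subseteq> range \<sigma>"
  by (induction t) (auto simp: Let_def)

lemma transcript_eqI:
  assumes "\<forall>S\<in>fst ` set (transcript \<sigma> M t). observe M' S = observe M S"
  shows "transcript \<sigma> M' t = transcript \<sigma> M t"
  using assms
proof (induction t)
  case (Suc t)
  let ?h = "transcript \<sigma> M t"
  have "\<forall>S\<in>fst ` set ?h. observe M' S = observe M S" and "observe M' (\<sigma> ?h) = observe M (\<sigma> ?h)"
    using Suc.prems by (simp_all add: Let_def)
  then have "transcript \<sigma> M' t = ?h" and "observe M' (\<sigma> ?h) = observe M (\<sigma> ?h)"
    using Suc.IH by blast+
  then show ?case
    by (simp add: Let_def)
qed simp

definition unit_model :: "nat set set \<Rightarrow> nl_model" where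
  "unit_model P = \<lparr>nests = P, wt = (\<lambda>_. 1), lam = (\<lambda>N. if card N = 1 then 1 else 0),
                   nwt = (\<lambda>N. real (card N))\<rparr>"

lemma nl_valid_unit_model:
  assumes "partition_on {1..n} P"
  shows "nl_valid n (unit_model P)"
proof -
  have "0 < card N" if "N \<in> P" for N
    using assms that finite_subset[of N "{1..n}"]
    by (auto simp: partition_on_def card_gt_0_iff)
  then show ?thesis
    using assms by (auto simp: nl_valid_def unit_model_def)
qed

lemma nest_val_unit_model:
  assumes "finite N" "N \<subseteq> S \<or> N \<inter> S = {}"
  shows "nest_val (unit_model P) N S = card (N \<inter> S)"
  using assms by (auto simp: nest_val_def unit_model_def Int_absorb2)

lemma observe_unit_model:
  assumes P: "partition_on {1..n} P" and S: "S \<subseteq> {1..n}"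
    and unsplit: "\<forall>N\<in>P. N \<subseteq> S \<or> N \<inter> S = {}"
  shows "observe (unit_model P) S = (\<lambda>i. if i \<in> insert 0 S then 1 / (1 + real (card S)) else 0)"
proof
  fix i
  have fin: "finite N" if "N \<in> P" for N
    using P that by (metis Union_upper finite_atLeastAtMost finite_subset partition_onD1)
  have "(\<Sum>N\<in>P. nest_val (unit_model P) N S) = (\<Sum>N\<in>P. real (card (N \<inter> S)))"
    using fin unsplit by (intro sum.cong) (simp_all add: nest_val_unit_model)
  also have "\<dots> = card S"
    using sum_card_Int_partition[OF P _ S] by (simp flip: of_nat_sum)
  finally have total: "(\<Sum>N\<in>nests (unit_model P). nest_val (unit_model P) N S) = card S"
    by (simp add: unit_model_def)
  show "observe (unit_model P) S i = (if i \<in> insert 0 S then 1 / (1 + real (card S)) else 0)"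
  proof (cases "i \<in> S")
    case True
    then obtain N where N: "N \<in> P" "i \<in> N"
      using P S by (auto simp: partition_on_def)
    then have "N \<subseteq> S" and "N \<noteq> {}"
      using unsplit True by auto
    moreover have "nest_of (unit_model P) i = N"
      using P N by (intro nest_of_eqI[where A = "{1..n}"]) (simp_all add: unit_model_def)
    ultimately show ?thesis
      using True S total fin[OF N(1)] nest_val_unit_model[OF fin[OF N(1)]]
      by (auto simp: observe_def choice_prob_def unit_model_def Int_absorb2)
  qed (auto simp: observe_def choice_prob_def total)
qed

lemma card_le_two_pow_if_enables_nest_identification:
  assumes ident: "enables_nest_identification n \<sigma> T"
  shows "n \<le> 2 ^ T"
proof (rule ccontr)
  assume "\<not> n \<le> 2 ^ T"
  define singletons where "singletons = (\<lambda>k. {k}) ` {1..n}"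
  define queries where "queries = map fst (transcript \<sigma> (unit_model singletons) T)"
  obtain i j where ij: "i \<in> {1..n}" "j \<in> {1..n}" "i \<noteq> j"
    and unseparated: "\<forall>S\<in>set queries. i \<in> S \<longleftrightarrow> j \<in> S"
    using ex_pair_not_separated[of "{1..n}" queries] \<open>\<not> n \<le> 2 ^ T\<close>
    by (auto simp: queries_def)
  define paired where "paired = insert {i, j} ((\<lambda>k. {k}) ` ({1..n} - {i, j}))"
  have singletons: "partition_on {1..n} singletons"
    by (simp add: singletons_def partition_on_singletons)
  have paired: "partition_on {1..n} paired"
    using ij by (simp add: paired_def partition_on_pair_singletons)
  have "observe (unit_model paired) S = observe (unit_model singletons) S" if "S \<in> set queries" for S
  proof -
    have "S \<in> range \<sigma>"
      using that fst_set_transcript_subset unfolding queries_def set_map by blast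
    then have S: "S \<subseteq> {1..n}"
      using ident by (auto simp: enables_nest_identification_def)
    have "\<forall>N\<in>paired. N \<subseteq> S \<or> N \<inter> S = {}"
      using unseparated that by (auto simp: paired_def)
    moreover have "\<forall>N\<in>singletons. N \<subseteq> S \<or> N \<inter> S = {}"
      by (auto simp: singletons_def)
    ultimately show ?thesis
      using observe_unit_model[OF paired S] observe_unit_model[OF singletons S] by (simp only:)
  qed
  then have "transcript \<sigma> (unit_model paired) T = transcript \<sigma> (unit_model singletons) T"
    by (intro transcript_eqI) (simp add: queries_def)
  then have "nests (unit_model paired) = nests (unit_model singletons)"
    using ident nl_valid_unit_model[OF singletons] nl_valid_unit_model[OF paired]
    unfolding enables_nest_identification_def by blast
  then have "paired = singletons"
    by (simp add: unit_model_def)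
  moreover have "{i, j} \<in> paired" and "{i, j} \<notin> singletons"
    using ij(3) by (auto simp: paired_def singletons_def)
  ultimately show False
    by simp
qed

theorem theoremB1:
  shows "\<exists>c>0. \<forall>n\<ge>2. \<forall>\<sigma> T. enables_nest_identification n \<sigma> T \<longrightarrow> c * ln (real n) \<le> real T"
proof (intro exI[of _ "1 / ln 2"] conjI allI impI)
  show "(0::real) < 1 / ln 2"
    by simp
  fix n :: nat and \<sigma> T
  assume "2 \<le> n" and "enables_nest_identification n \<sigma> T"
  then have "real n \<le> 2 ^ T"
    using card_le_two_pow_if_enables_nest_identification
    by (metis of_nat_le_iff of_nat_numeral of_nat_power)
  then have "ln (real n) \<le> ln (2 ^ T)"
    using \<open>2 \<le> n\<close> by simp
  also have "\<dots> = real T * ln 2"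
    by (simp add: ln_realpow)
  finally show "1 / ln 2 * ln (real n) \<le> real T"
    by (simp add: field_simps)
qed

end
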